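(* Let $M=B\circ S$, $x,x'\in\mathbb X$, and let $A_1,\dots,A_I$ and $E_1,\dots,E_J$ be partitions of $\mathbb Y$ with $\Pr[S(x)\in A_i]>0$, $\Pr[S(x')\in E_j]>0$ for all $i,j$. Write $s_1,\dots,s_{I+J}$ for the conditional pmfs $s_x(\cdot\mid A_1),\dots,s_x(\cdot\mid A_I),s_{x'}(\cdot\mid E_1),\dots,s_{x'}(\cdot\mid E_J)$ and let $\mathbb G$ be the set of all couplings between them. If $\gamma^*\in\mathbb G$ is $d_{\mathbb Y}$-compatible, then for every $\alpha$ (with $\alpha>1$), $$\gamma^*\in\arg\min_{\gamma\in\mathbb G}\sum_{(\mathbf y^{(1)},\mathbf y^{(2)})\in\mathbb Y^{I+J}}\hat c_\alpha(\mathbf y^{(1)},\mathbf y^{(2)})\,\gamma(\mathbf y^{(1)},\mathbf y^{(2)}),$$ where $\hat c_\alpha$ is the cost upper bound defined in the context.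
   Context: Setting: finite $\mathbb A$, $\mathbb X\subseteq\mathcal P(\mathbb A)$, finite batch space $\mathbb Y$ with a symmetric neighboring relation $\simeq_{\mathbb Y}$ and induced distance $d_{\mathbb Y}$ (length of the shortest chain of neighbors; $0$ from $y$ to itself). $S$ assigns to each dataset $x$ a pmf $s_x$ on $\mathbb Y$, $B$ assigns to each batch $y$ a density $b_y$ on $\mathbb R^D$, $m_x=\sum_y b_y s_x(y)$. $H_\alpha(p\|q)=\int\max\{p-\alpha q,0\}$, $\Lambda_\alpha(p\|q)=\int p^\alpha q^{1-\alpha}$; $\Psi_\alpha$ is either. Cost: $c_\alpha(\mathbf y^{(1)},\mathbf y^{(2)})=\Psi_\alpha(\sum_i b_{y^{(1)}_i}\Pr[S(x)\in A_i]\|\sum_j b_{y^{(2)}_j}\Pr[S(x')\in E_j])$ and $\hat c_\alpha(\mathbf y^{(1)},\mathbf y^{(2)})$ is the maximum of $c_\alpha(\hat{\mathbf y}^{(1)},\hat{\mathbf y}^{(2)})$ over $\hat{\mathbf y}^{(1)}\in\mathbb Y^I,\hat{\mathbf y}^{(2)}\in\mathbb Y^J$ with $d_{\mathbb Y}(\hat y^{(k)}_t,\hat y^{(l)}_u)\le d_{\mathbb Y}(y^{(k)}_t,y^{(l)}_u)$ for all $k,l,t,u$. For a pmf $p$, $\mathrm{supp}(p)=\{y:p(y)>0\}$; $d_{\mathbb Y}(y,\mathrm{supp}(p))=\min_{y'\in\mathrm{supp}(p)}d_{\mathbb Y}(y,y')$ and $d_{\mathbb Y}(\mathrm{supp}(p_1),\mathrm{supp}(p_2))=\min_{y_1\in\mathrm{supp}(p_1),y_2\in\mathrm{supp}(p_2)}d_{\mathbb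 Y}(y_1,y_2)$. A coupling $\gamma$ of pmfs $p_1,\dots,p_N$ (indexing the tuple as $\mathbf y=(y_1,\dots,y_N)$) is $d_{\mathbb Y}$-compatible if $\gamma(\mathbf y)>0$ implies both $d_{\mathbb Y}(y_1,y_u)=d_{\mathbb Y}(y_1,\mathrm{supp}(p_u))$ for all $u>1$ and $d_{\mathbb Y}(y_t,y_u)=d_{\mathbb Y}(\mathrm{supp}(p_t),\mathrm{supp}(p_u))$ for all $u>t>1$. *)

theory Defs
  imports "HOL-Probability.Probability"
begin

(* d_Y: length of the shortest chain of neighbours; \<infinity> if unreachable, 0 from y to itself *)
definition ydist :: "('y \<Rightarrow> 'y \<Rightarrow> bool) \<Rightarrow> 'y \<Rightarrow> 'y \<Rightarrow> enat" where
  "ydist nb y y' = (INF n \<in> {n. (y, y') \<in> {(a, b). nb a b} ^^ n}. enat n)"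

definition ydist_set :: "('y \<Rightarrow> 'y \<Rightarrow> bool) \<Rightarrow> 'y \<Rightarrow> 'y set \<Rightarrow> enat" where
  "ydist_set nb y P = Min ((\<lambda>y'. ydist nb y y') ` P)"

definition ydist_sets :: "('y \<Rightarrow> 'y \<Rightarrow> bool) \<Rightarrow> 'y set \<Rightarrow> 'y set \<Rightarrow> enat" where
  "ydist_sets nb P Q = Min ((\<lambda>(a, b). ydist nb a b) ` (P \<times> Q))"

definition H_div :: "real \<Rightarrow> ('d::euclidean_space \<Rightarrow> real) \<Rightarrow> ('d \<Rightarrow> real) \<Rightarrow> ennreal" where
  "H_div \<alpha> p q = (\<integral>\<^sup>+ z. ennreal (max (p z - \<alpha> * q z) 0) \<partial>lborel)"

(* Lambda_alpha(p||q) = \<integral> p^alpha q^(1-alpha), with the usual conventions 0/0 = 0, a/0 = \<infinity> *)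
definition L_div :: "real \<Rightarrow> ('d::euclidean_space \<Rightarrow> real) \<Rightarrow> ('d \<Rightarrow> real) \<Rightarrow> ennreal" where
  "L_div \<alpha> p q = (\<integral>\<^sup>+ z. (if q z = 0 then (if p z = 0 then 0 else \<infinity>)
                              else ennreal (p z powr \<alpha> * q z powr (1 - \<alpha>))) \<partial>lborel)"

definition is_coupling :: "'y pmf list \<Rightarrow> 'y list pmf \<Rightarrow> bool" where
  "is_coupling ps \<gamma> \<longleftrightarrow> (\<forall>ys \<in> set_pmf \<gamma>. length ys = length ps) \<and>
      (\<forall>k < length ps. map_pmf (\<lambda>ys. ys ! k) \<gamma> = ps ! k)"

(* d_Y-compatibility; index 0 here is index 1 of the paper *)
definition dY_compatible :: "('y \<Rightarrow> 'y \<Rightarrow> bool) \<Rightarrow> 'y pmf list \<Rightarrow> 'y list pmf \<Rightarrow> bool" where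
  "dY_compatible nb ps \<gamma> \<longleftrightarrow> (\<forall>ys \<in> set_pmf \<gamma>.
      (\<forall>u. 0 < u \<and> u < length ps \<longrightarrow> ydist nb (ys ! 0) (ys ! u) = ydist_set nb (ys ! 0) (set_pmf (ps ! u))) \<and>
      (\<forall>t u. 0 < t \<and> t < u \<and> u < length ps \<longrightarrow>
          ydist nb (ys ! t) (ys ! u) = ydist_sets nb (set_pmf (ps ! t)) (set_pmf (ps ! u))))"

(* c_alpha(y1, y2) with weights w1 i = Pr[S(x) \<in> A_i], w2 j = Pr[S(x') \<in> E_j];
   Psi already has alpha built in *)
definition cost :: "(('d \<Rightarrow> real) \<Rightarrow> ('d \<Rightarrow> real) \<Rightarrow> ennreal) \<Rightarrow> ('y \<Rightarrow> 'd \<Rightarrow> real) \<Rightarrow>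
    (nat \<Rightarrow> real) \<Rightarrow> (nat \<Rightarrow> real) \<Rightarrow> 'y list \<Rightarrow> 'y list \<Rightarrow> ennreal" where
  "cost Psi b w1 w2 y1 y2 =
     Psi (\<lambda>z. \<Sum>i < length y1. b (y1 ! i) z * w1 i) (\<lambda>z. \<Sum>j < length y2. b (y2 ! j) z * w2 j)"

(* \<hat>c_alpha on a concatenated tuple ys = y1 @ y2 with length y1 = I, length y2 = J *)
definition cost_hat :: "(('d \<Rightarrow> real) \<Rightarrow> ('d \<Rightarrow> real) \<Rightarrow> ennreal) \<Rightarrow> ('y \<Rightarrow> 'd \<Rightarrow> real) \<Rightarrow>
    ('y \<Rightarrow> 'y \<Rightarrow> bool) \<Rightarrow> nat \<Rightarrow> nat \<Rightarrow> (nat \<Rightarrow> real) \<Rightarrow> (nat \<Rightarrow> real) \<Rightarrow> 'y list \<Rightarrow> ennreal" where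
  "cost_hat Psi b nb I J w1 w2 ys =
     Max {cost Psi b w1 w2 (take I yh) (drop I yh) | yh.
            length yh = I + J \<and>
            (\<forall>k < I + J. \<forall>l < I + J. ydist nb (yh ! k) (yh ! l) \<le> ydist nb (ys ! k) (ys ! l))}"

end

theory Submission
  imports Defs
begin

text \<open>
  A \<open>d\<^sub>Y\<close>-compatible coupling \<open>\<gamma>\<^sup>*\<close> realises, on every tuple of its support, the smallest
  pairwise distances possible between points of the supports of the marginals, given the first
  coordinate. As \<open>\<hat>c\<^sub>\<alpha>\<close> is monotone in the pairwise distances of its argument, the cost of any tuple
  drawn from the supports of the marginals dominates the cost of every support tuple of \<open>\<gamma>\<^sup>*\<close>
  with the same first coordinate. Hence on the support of \<open>\<gamma>\<^sup>*\<close> the cost is a function \<open>g\<close> of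
  the first coordinate alone, every coupling has expected cost at least \<open>\<integral> g ds\<^sub>1\<close>, and \<open>\<gamma>\<^sup>*\<close>
  attains this bound.
\<close>

lemma relpow_converse_of_sym:
  assumes "\<forall>y y'. nb y y' \<longrightarrow> nb y' y" and "(a, c) \<in> {(a, b). nb a b} ^^ n"
  shows "(c, a) \<in> {(a, b). nb a b} ^^ n"
  using assms(2)
proof (induction n arbitrary: c)
  case (Suc n)
  then obtain d where "(a, d) \<in> {(a, b). nb a b} ^^ n" and "nb d c" by auto
  with Suc.IH assms(1) show ?case by (blast intro: relpow_Suc_I2)
qed simp

lemma ydist_commute:
  assumes "\<forall>y y'. nb y y' \<longrightarrow> nb y' y"
  shows "ydist nb y y' = ydist nb y' y"
  unfolding ydist_def using relpow_converse_of_sym[OF assms] by metis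

lemma ydist_self [simp]: "ydist nb y y = 0"
proof -
  have "ydist nb y y \<le> enat 0" unfolding ydist_def by (rule INF_lower) simp
  then show ?thesis by (simp add: enat_0)
qed

lemma is_coupling_length: "is_coupling ps \<gamma> \<Longrightarrow> ys \<in> set_pmf \<gamma> \<Longrightarrow> length ys = length ps"
  unfolding is_coupling_def by blast

lemma is_coupling_nth_in_set_pmf:
  assumes "is_coupling ps \<gamma>" "ys \<in> set_pmf \<gamma>" "k < length ps"
  shows "ys ! k \<in> set_pmf (ps ! k)"
proof -
  have "map_pmf (\<lambda>ys. ys ! k) \<gamma> = ps ! k" using assms unfolding is_coupling_def by blast
  then show ?thesis using assms(2) by (metis image_eqI set_map_pmf)
qed

lemma nn_integral_coupling_first:
  assumes "is_coupling ps \<gamma>" "0 < length ps"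
  shows "(\<integral>\<^sup>+ys. f (ys ! 0) \<partial>measure_pmf \<gamma>) = (\<integral>\<^sup>+y. f y \<partial>measure_pmf (ps ! 0))"
proof -
  have "map_pmf (\<lambda>ys. ys ! 0) \<gamma> = ps ! 0" using assms unfolding is_coupling_def by blast
  then show ?thesis by (metis nn_integral_map_pmf)
qed

lemma sum_lists_length_eq_coupling:
  fixes C :: "'y::finite list \<Rightarrow> ennreal"
  assumes "is_coupling ps \<gamma>"
  shows "(\<Sum>ys \<in> {ys. length ys = length ps}. C ys * ennreal (pmf \<gamma> ys)) = (\<integral>\<^sup>+ys. C ys \<partial>measure_pmf \<gamma>)"
  using finite_lists_length_eq[of "UNIV :: 'y set" "length ps"] is_coupling_length[OF assms]
  by (intro nn_integral_measure_pmf_support[symmetric]) auto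

lemma coupling_nn_integral_minimal:
  assumes coup: "is_coupling ps \<gamma>s" and coup': "is_coupling ps \<gamma>" and nonempty: "0 < length ps"
    and le: "\<And>z ys. z \<in> set_pmf \<gamma>s \<Longrightarrow> length ys = length ps \<Longrightarrow>
                    (\<forall>k < length ps. ys ! k \<in> set_pmf (ps ! k)) \<Longrightarrow> z ! 0 = ys ! 0 \<Longrightarrow> C z \<le> C ys"
  shows "(\<integral>\<^sup>+ys. C ys \<partial>measure_pmf \<gamma>s) \<le> (\<integral>\<^sup>+ys. C ys \<partial>measure_pmf \<gamma>)"
proof -
  define rep where "rep y0 = (SOME z. z \<in> set_pmf \<gamma>s \<and> z ! 0 = y0)" for y0
  have rep: "rep y0 \<in> set_pmf \<gamma>s \<and> rep y0 ! 0 = y0" if "y0 \<in> set_pmf (ps ! 0)" for y0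
  proof -
    have "map_pmf (\<lambda>ys. ys ! 0) \<gamma>s = ps ! 0"
      using coup nonempty unfolding is_coupling_def by blast
    with that have "\<exists>z. z \<in> set_pmf \<gamma>s \<and> z ! 0 = y0" by (metis imageE set_map_pmf)
    then show ?thesis unfolding rep_def by (rule someI_ex)
  qed
  have le_coupled: "C (rep (ys ! 0)) \<le> C ys" if "is_coupling ps \<gamma>'" "ys \<in> set_pmf \<gamma>'" for \<gamma>' ys
    using rep[OF is_coupling_nth_in_set_pmf[OF that nonempty]] le
      is_coupling_length[OF that] is_coupling_nth_in_set_pmf[OF that] by blast
  have eq_on_support: "C ys = C (rep (ys ! 0))" if "ys \<in> set_pmf \<gamma>s" for ys
  proof (rule antisym)
    have "rep (ys ! 0) \<in> set_pmf \<gamma>s" "rep (ys ! 0) ! 0 = ys ! 0"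
      using rep[OF is_coupling_nth_in_set_pmf[OF coup that nonempty]] by auto
    then show "C ys \<le> C (rep (ys ! 0))"
      using le[OF that] is_coupling_length[OF coup] is_coupling_nth_in_set_pmf[OF coup] by metis
  qed (rule le_coupled[OF coup that])
  have "(\<integral>\<^sup>+ys. C ys \<partial>measure_pmf \<gamma>s) = (\<integral>\<^sup>+ys. C (rep (ys ! 0)) \<partial>measure_pmf \<gamma>s)"
    using eq_on_support by (intro nn_integral_cong_AE) (auto simp: AE_measure_pmf_iff)
  also have "\<dots> = (\<integral>\<^sup>+ys. C (rep (ys ! 0)) \<partial>measure_pmf \<gamma>)"
    unfolding nn_integral_coupling_first[OF coup nonempty, where f = "\<lambda>y. C (rep y)"]
      nn_integral_coupling_first[OF coup' nonempty, where f = "\<lambda>y. C (rep y)"] ..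
  also have "\<dots> \<le> (\<integral>\<^sup>+ys. C ys \<partial>measure_pmf \<gamma>)"
    using le_coupled[OF coup'] by (intro nn_integral_mono_AE) (auto simp: AE_measure_pmf_iff)
  finally show ?thesis .
qed

definition ydist_dominated :: "('y \<Rightarrow> 'y \<Rightarrow> bool) \<Rightarrow> nat \<Rightarrow> 'y list \<Rightarrow> 'y list \<Rightarrow> bool" where
  "ydist_dominated nb n zs ys \<longleftrightarrow>
     (\<forall>k < n. \<forall>l < n. ydist nb (zs ! k) (zs ! l) \<le> ydist nb (ys ! k) (ys ! l))"

lemma ydist_dominated_trans:
  "ydist_dominated nb n xs ys \<Longrightarrow> ydist_dominated nb n ys zs \<Longrightarrow> ydist_dominated nb n xs zs"
  unfolding ydist_dominated_def by (meson order_trans)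

lemma cost_hat_eq_Max:
  "cost_hat Psi b nb I J w1 w2 ys =
     Max ((\<lambda>yh. cost Psi b w1 w2 (take I yh) (drop I yh)) ` {yh. length yh = I + J \<and> ydist_dominated nb (I + J) yh ys})"
  unfolding cost_hat_def ydist_dominated_def by (simp add: setcompr_eq_image)

lemma cost_hat_mono:
  fixes zs ys :: "'y::finite list"
  assumes "length zs = I + J" and "ydist_dominated nb (I + J) zs ys"
  shows "cost_hat Psi b nb I J w1 w2 zs \<le> cost_hat Psi b nb I J w1 w2 ys"
  unfolding cost_hat_eq_Max
proof (rule Max_mono)
  show "finite ((\<lambda>yh. cost Psi b w1 w2 (take I yh) (drop I yh)) ` {yh. length yh = I + J \<and> ydist_dominated nb (I + J) yh ys})"
    using finite_lists_length_eq[of "UNIV :: 'y set" "I + J"] by (auto intro: finite_subset)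
  have "ydist_dominated nb (I + J) zs zs" by (simp add: ydist_dominated_def)
  then show "(\<lambda>yh. cost Psi b w1 w2 (take I yh) (drop I yh)) ` {yh. length yh = I + J \<and> ydist_dominated nb (I + J) yh zs} \<noteq> {}"
    using assms(1) by blast
qed (use assms(2) ydist_dominated_trans in blast)

lemma dY_compatible_ydist_dominated:
  fixes nb :: "'y::finite \<Rightarrow> 'y \<Rightarrow> bool"
  assumes sym: "\<forall>y y'. nb y y' \<longrightarrow> nb y' y"
    and comp: "dY_compatible nb ps \<gamma>s" and z: "z \<in> set_pmf \<gamma>s"
    and ys: "\<forall>k < length ps. ys ! k \<in> set_pmf (ps ! k)" and first: "z ! 0 = ys ! 0"
  shows "ydist_dominated nb (length ps) z ys"
proof -
  have ordered: "ydist nb (z ! t) (z ! u) \<le> ydist nb (ys ! t) (ys ! u)" if "t < u" "u < length ps" for t u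
  proof (cases "t = 0")
    case True
    then have "ydist nb (z ! t) (z ! u) = ydist_set nb (ys ! 0) (set_pmf (ps ! u))"
      using comp z that first unfolding dY_compatible_def by auto
    also have "\<dots> \<le> ydist nb (ys ! t) (ys ! u)"
      unfolding ydist_set_def using ys that True by (intro Min_le) auto
    finally show ?thesis .
  next
    case False
    then have "ydist nb (z ! t) (z ! u) = ydist_sets nb (set_pmf (ps ! t)) (set_pmf (ps ! u))"
      using comp z that unfolding dY_compatible_def by auto
    also have "\<dots> \<le> ydist nb (ys ! t) (ys ! u)"
      unfolding ydist_sets_def using ys that
      by (intro Min_le) (auto intro!: image_eqI[where x="(ys ! t, ys ! u)"])
    finally show ?thesis .
  qed
  show ?thesis
    unfolding ydist_dominated_def
  proof (intro allI impI)
    fix k l assume kl: "k < length ps" "l < length ps"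
    consider "k = l" | "k < l" | "l < k" by linarith
    then show "ydist nb (z ! k) (z ! l) \<le> ydist nb (ys ! k) (ys ! l)"
    proof cases
      case 3
      then show ?thesis using ordered[OF 3 kl(1)] ydist_commute[OF sym] by metis
    qed (use ordered kl in simp_all)
  qed
qed

theorem mainTheorem4:
  fixes nb :: "'y::finite \<Rightarrow> 'y \<Rightarrow> bool"
    and X :: "'a::finite set set"
    and S :: "'a set \<Rightarrow> 'y pmf"
    and b :: "'y \<Rightarrow> 'd::euclidean_space \<Rightarrow> real"
    and x x' :: "'a set"
    and A E :: "nat \<Rightarrow> 'y set"
    and I J :: nat
    and \<alpha> :: real
    and Psi :: "('d \<Rightarrow> real) \<Rightarrow> ('d \<Rightarrow> real) \<Rightarrow> ennreal"
    and \<gamma>s :: "'y list pmf"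
  assumes nb_sym: "\<forall>y y'. nb y y' \<longrightarrow> nb y' y"
    and dens: "\<forall>y. b y \<in> borel_measurable lborel \<and> (\<forall>z. 0 \<le> b y z) \<and>
                   (\<integral>\<^sup>+ z. ennreal (b y z) \<partial>lborel) = 1"
    and x_in: "x \<in> X" and x'_in: "x' \<in> X"
    and A_disj: "\<forall>i < I. \<forall>i' < I. i \<noteq> i' \<longrightarrow> A i \<inter> A i' = {}"
    and A_cover: "(\<Union>i < I. A i) = UNIV"
    and E_disj: "\<forall>j < J. \<forall>j' < J. j \<noteq> j' \<longrightarrow> E j \<inter> E j' = {}"
    and E_cover: "(\<Union>j < J. E j) = UNIV"
    and A_pos: "\<forall>i < I. measure_pmf.prob (S x) (A i) > 0"
    and E_pos: "\<forall>j < J. measure_pmf.prob (S x') (E j) > 0"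
    and alpha: "\<alpha> > 1"
    and Psi_def: "Psi = H_div \<alpha> \<or> Psi = L_div \<alpha>"
    and coup: "is_coupling (map (\<lambda>i. cond_pmf (S x) (A i)) [0..<I] @ map (\<lambda>j. cond_pmf (S x') (E j)) [0..<J]) \<gamma>s"
    and compat: "dY_compatible nb (map (\<lambda>i. cond_pmf (S x) (A i)) [0..<I] @ map (\<lambda>j. cond_pmf (S x') (E j)) [0..<J]) \<gamma>s"
  shows "is_arg_min
           (\<lambda>\<gamma>. \<Sum>ys \<in> {ys :: 'y list. length ys = I + J}.
                  cost_hat Psi b nb I J (\<lambda>i. measure_pmf.prob (S x) (A i)) (\<lambda>j. measure_pmf.prob (S x') (E j)) ys
                  * ennreal (pmf \<gamma> ys))
           (is_coupling (map (\<lambda>i. cond_pmf (S x) (A i)) [0..<I] @ map (\<lambda>j. cond_pmf (S x') (E j)) [0..<J]))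
           \<gamma>s"
proof -
  \<comment> \<open>Only the symmetry of the neighbouring relation enters: the argument works for any cost \<open>Psi\<close>.\<close>
  define ps where "ps = map (\<lambda>i. cond_pmf (S x) (A i)) [0..<I] @ map (\<lambda>j. cond_pmf (S x') (E j)) [0..<J]"
  define C where "C = cost_hat Psi b nb I J (\<lambda>i. measure_pmf.prob (S x) (A i)) (\<lambda>j. measure_pmf.prob (S x') (E j))"
  have len: "length ps = I + J" unfolding ps_def by simp
  have "0 < I" using A_cover by (rule contrapos_pp) simp
  then have nonempty: "0 < length ps" using len by simp
  have le: "C z \<le> C ys" if "z \<in> set_pmf \<gamma>s" "length ys = length ps"
      "\<forall>k < length ps. ys ! k \<in> set_pmf (ps ! k)" "z ! 0 = ys ! 0" for z ys
    unfolding C_def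
  proof (rule cost_hat_mono)
    show "length z = I + J" using is_coupling_length[OF coup[folded ps_def] that(1)] len by simp
    show "ydist_dominated nb (I + J) z ys"
      using dY_compatible_ydist_dominated[OF nb_sym compat[folded ps_def] that(1,3,4)] len by simp
  qed
  have "(\<Sum>ys \<in> {ys. length ys = I + J}. C ys * ennreal (pmf \<gamma>s ys))
      \<le> (\<Sum>ys \<in> {ys. length ys = I + J}. C ys * ennreal (pmf \<gamma> ys))" if "is_coupling ps \<gamma>" for \<gamma>
    using coupling_nn_integral_minimal[OF coup[folded ps_def] that nonempty le]
    unfolding len[symmetric] sum_lists_length_eq_coupling[OF coup[folded ps_def]]
      sum_lists_length_eq_coupling[OF that] .
  then show ?thesis
    using coup unfolding is_arg_min_def ps_def[symmetric] C_def[symmetric] by (auto simp: not_less)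
qed

end
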